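(* For a sequence $\{t_n\}_{n=0}^\infty\subset[0,1]$, the following are equivalent: (i) $\sum_n t_n^2=\infty$; (ii) for every real Hilbert space $H$, every family $\{C_\alpha\}_{\alpha\in\Omega}$ ($|\Omega|\ge 2$) of closed convex subsets of $H$ with nonempty intersection $C=\bigcap_\alpha C_\alpha$, and every starting element $x_0\in H$, every sequence $\{x_n\}$ of remote projections onto $\{C_\alpha\}$ with weakness parameters $\{t_n\}$ has a partial weak limit (weak limit of some subsequence) belonging to $C$; (iii) for every real Hilbert space $H$, every dictionary $D\subset S(H)$ and every starting element $x_0\in H$, the residuals $\{x_n\}$ of every realization of the Weak Greedy Algorithm with weakness parameters $\{t_n\}$ have $0$ as a partial weak limit.
   Context: $P_\alpha$ is the metric projection onto $C_\alpha$. A sequence of remote projections with weakness parameters $t_n\in[0,1]$ starting at $x_0$: $x_{n+1}=P_{\alpha(n)}x_n$, where $\alpha(n)\in\Omega$ is any index with $\mathrm{dist}(x_n,C_{\alpha(n)})\ge t_n\sup_\alpha\mathrm{dist}(x_n,C_\alpha)$; if $t_n=1$ for some $n$ it is required that $\max_\alpha\mathrm{dist}(x,C_\alpha)$ is attained for every $x\in H$. $S(H)=\{s\in H:|s|=1\}$; a dictionary is a set $D\subset S(H)$ whose closed linear span is $H$. The Weak Greedy Algorithm with weakness parameters $\{t_n\}$ and starting element $x_0$ generates $x_{n+1}=x_n-\langle x_n,g_n\rangle g_n$, where $g_n\in D$ is any element with $|\langle x_n,g_n\rangle|\ge t_n\sup\{|\langle x_n,g\rangle|:g\in D\}$; if $t_n=1$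 for some $n$ it is required that $\max\{|\langle x,g\rangle|:g\in D\}$ is attained for every $x\in H$. *)

theory Defs
  imports "HOL-Analysis.Analysis"
begin

text \<open>Metric projection onto a set S (the nearest point of S to y; unique for
nonempty closed convex S in a real Hilbert space).\<close>
definition metric_proj :: "'a::real_inner set \<Rightarrow> 'a \<Rightarrow> 'a" where
  "metric_proj S y = (THE p. p \<in> S \<and> (\<forall>z\<in>S. dist y p \<le> dist y z))"

definition weakly_converges :: "(nat \<Rightarrow> 'a::real_inner) \<Rightarrow> 'a \<Rightarrow> bool" where
  "weakly_converges x y \<longleftrightarrow> (\<forall>z. (\<lambda>n. x n \<bullet> z) \<longlonglongrightarrow> y \<bullet> z)"

definition partial_weak_limit :: "(nat \<Rightarrow> 'a::real_inner) \<Rightarrow> 'a \<Rightarrow> bool" where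
  "partial_weak_limit x y \<longleftrightarrow> (\<exists>r. strict_mono r \<and> weakly_converges (x \<circ> r) y)"

definition remote_proj_seq ::
  "'i set \<Rightarrow> ('i \<Rightarrow> 'a::real_inner set) \<Rightarrow> (nat \<Rightarrow> real) \<Rightarrow> (nat \<Rightarrow> 'a) \<Rightarrow> bool" where
  "remote_proj_seq \<Omega> C t x \<longleftrightarrow>
     ((\<exists>n. t n = 1) \<longrightarrow>
        (\<forall>y. \<exists>\<beta>\<in>\<Omega>. infdist y (C \<beta>) = (SUP \<alpha>\<in>\<Omega>. infdist y (C \<alpha>)))) \<and>
     (\<forall>n. \<exists>\<beta>\<in>\<Omega>. infdist (x n) (C \<beta>) \<ge> t n * (SUP \<alpha>\<in>\<Omega>. infdist (x n) (C \<alpha>))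
                  \<and> x (Suc n) = metric_proj (C \<beta>) (x n))"

definition dictionary :: "'a::real_inner set \<Rightarrow> bool" where
  "dictionary D \<longleftrightarrow> (\<forall>g\<in>D. norm g = 1) \<and> closure (span D) = UNIV"

definition wga_seq :: "'a::real_inner set \<Rightarrow> (nat \<Rightarrow> real) \<Rightarrow> (nat \<Rightarrow> 'a) \<Rightarrow> bool" where
  "wga_seq D t x \<longleftrightarrow>
     ((\<exists>n. t n = 1) \<longrightarrow> (\<forall>y. \<exists>h\<in>D. \<bar>y \<bullet> h\<bar> = (SUP g\<in>D. \<bar>y \<bullet> g\<bar>))) \<and>
     (\<forall>n. \<exists>g\<in>D. \<bar>x n \<bullet> g\<bar> \<ge> t n * (SUP g'\<in>D. \<bar>x n \<bullet> g'\<bar>)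
                 \<and> x (Suc n) = x n - (x n \<bullet> g) *\<^sub>R g)"

end

theory Submission
  imports Defs "HOL-Library.Diagonal_Subsequence"
begin

text \<open>Fix a point c of the intersection. Each remote projection satisfies
  \<open>\<parallel>x n - x (n + 1)\<parallel>\<^sup>2 + \<parallel>x (n + 1) - c\<parallel>\<^sup>2 \<le> \<parallel>x n - c\<parallel>\<^sup>2\<close>, so the squared step lengths are
  summable, while each step is at least \<open>t n\<close> times the largest distance \<open>D n\<close> from \<open>x n\<close> to
  the sets. If \<open>\<Sum> (t n)\<^sup>2 = \<infinity>\<close> this forces \<open>D n \<rightarrow> 0\<close> along a subsequence; by weak sequential
  compactness a further subsequence converges weakly, and its limit lies in every closed convex
  set. The weak greedy algorithm is the special case of projections onto the hyperplanes
  orthogonal to the dictionary elements, whose only common point is 0.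
  Conversely, if \<open>\<Sum> (t n)\<^sup>2 < \<infinity>\<close>, an orthonormal sequence in an infinite-dimensional space
  yields a dictionary and a realization of the weak greedy algorithm whose residuals keep their
  first coordinate above 1/2.\<close>

lemma convex_dist_sq_le_parallelogram:
  fixes S :: "'a::real_inner set"
  assumes "convex S" "a \<in> S" "b \<in> S"
  shows "(dist a b)\<^sup>2 \<le> 2 * (dist y a)\<^sup>2 + 2 * (dist y b)\<^sup>2 - 4 * (infdist y S)\<^sup>2"
proof -
  let ?u = "y - a" and ?v = "y - b" and ?m = "(1/2) *\<^sub>R a + (1/2) *\<^sub>R b"
  have "?m \<in> S" using convexD[OF assms, of "1/2" "1/2"] by simp
  then have "infdist y S \<le> dist y ?m" by (rule infdist_le)
  also have "?u + ?v = 2 *\<^sub>R (y - ?m)" by (simp add: algebra_simps scaleR_2)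
  then have "dist y ?m = norm (?u + ?v) / 2" by (simp add: dist_norm)
  finally have "(2 * infdist y S)\<^sup>2 \<le> (norm (?u + ?v))\<^sup>2"
    using infdist_nonneg by (intro power_mono) auto
  moreover have "(norm (?u - ?v))\<^sup>2 + (norm (?u + ?v))\<^sup>2 = 2 * (norm ?u)\<^sup>2 + 2 * (norm ?v)\<^sup>2"
    by (simp add: power2_norm_eq_inner inner_add inner_diff inner_commute)
  ultimately show ?thesis by (simp add: dist_norm norm_minus_commute)
qed

lemma infdist_minimizing_seq:
  assumes "S \<noteq> {}"
  obtains s where "\<And>n. s n \<in> S" "\<And>n. (dist y (s n))\<^sup>2 < (infdist y S)\<^sup>2 + 1 / Suc n"
proof -
  have "\<exists>s\<in>S. (dist y s)\<^sup>2 < (infdist y S)\<^sup>2 + 1 / Suc n" for n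
  proof -
    let ?e = "sqrt ((infdist y S)\<^sup>2 + 1 / Suc n)"
    have "Inf (dist y ` S) < ?e"
      using infdist_nonneg infdist_notempty[OF assms] by (simp add: real_less_rsqrt)
    then obtain s where "s \<in> S" "dist y s < ?e"
      using cInf_lessD[of "dist y ` S"] assms by blast
    then have "(dist y s)\<^sup>2 < ?e\<^sup>2" by (intro power_strict_mono) auto
    then show ?thesis using \<open>s \<in> S\<close> by auto
  qed
  then show ?thesis using that by metis
qed

lemma closed_convex_nearest_point_exists:
  fixes S :: "'a::{real_inner,complete_space} set"
  assumes S: "closed S" "convex S" "S \<noteq> {}"
  obtains p where "p \<in> S" "\<And>z. z \<in> S \<Longrightarrow> dist y p \<le> dist y z"
proof -
  let ?d = "infdist y S"
  obtain s where sS: "\<And>n. s n \<in> S" and s_min: "\<And>n. (dist y (s n))\<^sup>2 < ?d\<^sup>2 + 1 / Suc n"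
    using infdist_minimizing_seq[of S y, OF S(3)] by blast
  have "Cauchy s"
  proof (rule metric_CauchyI)
    fix e :: real assume "e > 0"
    then obtain N where N: "inverse (real (Suc N)) < e\<^sup>2 / 4" using reals_Archimedean[of "e\<^sup>2 / 4"] by auto
    have "dist (s m) (s n) < e" if "N \<le> m" "N \<le> n" for m n
    proof -
      have "2 / real (Suc m) \<le> 2 / Suc N" "2 / real (Suc n) \<le> 2 / Suc N"
        using that by (simp_all add: frac_le)
      then have "(dist (s m) (s n))\<^sup>2 < 4 * inverse (real (Suc N))"
        using convex_dist_sq_le_parallelogram[OF S(2) sS sS, of m n y] s_min[of m] s_min[of n]
        by (simp add: inverse_eq_divide)
      also have "\<dots> < e\<^sup>2" using N by simp
      finally show ?thesis by (rule power_less_imp_less_base) (use \<open>e > 0\<close> in simp)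
    qed
    then show "\<exists>M. \<forall>m\<ge>M. \<forall>n\<ge>M. dist (s m) (s n) < e" by auto
  qed
  then obtain p where p: "s \<longlonglongrightarrow> p" using Cauchy_convergent convergent_def by blast
  have "p \<in> S" using closed_sequentially[OF S(1) sS p] .
  moreover have "(dist y p)\<^sup>2 \<le> ?d\<^sup>2"
  proof (rule LIMSEQ_le)
    show "(\<lambda>n. (dist y (s n))\<^sup>2) \<longlonglongrightarrow> (dist y p)\<^sup>2" by (intro tendsto_intros p)
    show "(\<lambda>n. ?d\<^sup>2 + 1 / Suc n) \<longlonglongrightarrow> ?d\<^sup>2"
      using tendsto_add[OF tendsto_const LIMSEQ_Suc[OF lim_inverse_n']] by (simp add: inverse_eq_divide)
    show "\<exists>N. \<forall>n\<ge>N. (dist y (s n))\<^sup>2 \<le> ?d\<^sup>2 + 1 / Suc n" using s_min by (simp add: less_imp_le)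
  qed
  then have "dist y p \<le> ?d" using infdist_nonneg by (rule power2_le_imp_le)
  then have "dist y p \<le> dist y z" if "z \<in> S" for z
    using infdist_le[OF that, of y] by simp
  ultimately show ?thesis using that by blast
qed

lemma nearest_point_obtuse:
  fixes S :: "'a::real_inner set"
  assumes "convex S" "p \<in> S" "\<And>z. z \<in> S \<Longrightarrow> dist y p \<le> dist y z" "z \<in> S"
  shows "(y - p) \<bullet> (z - p) \<le> 0"
proof (rule ccontr)
  define a where "a = (y - p) \<bullet> (z - p)"
  define q where "q = (norm (z - p))\<^sup>2"
  assume "\<not> (y - p) \<bullet> (z - p) \<le> 0"
  then have a0: "a > 0" by (simp add: a_def)
  then have q0: "q > 0" by (auto simp: a_def q_def)
  \<comment> \<open>A small step from p towards z would bring us closer to y.\<close>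
  define l where "l = min 1 (a / q)"
  have l: "0 < l" "l \<le> 1" "l * q \<le> a" using a0 q0 by (auto simp: l_def min_def field_simps)
  have "(1 - l) *\<^sub>R p + l *\<^sub>R z \<in> S" using convexD[OF assms(1,2,4), of "1 - l" l] l by simp
  then have "(dist y p)\<^sup>2 \<le> (dist y ((1 - l) *\<^sub>R p + l *\<^sub>R z))\<^sup>2"
    using assms(3) by (intro power_mono) auto
  also have "\<dots> = (norm ((y - p) - l *\<^sub>R (z - p)))\<^sup>2"
  proof -
    have "y - ((1 - l) *\<^sub>R p + l *\<^sub>R z) = (y - p) - l *\<^sub>R (z - p)" by (simp add: algebra_simps)
    then show ?thesis unfolding dist_norm by (simp only:)
  qed
  also have "\<dots> = (dist y p)\<^sup>2 - 2 * l * a + l\<^sup>2 * q"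
    unfolding a_def q_def dist_norm power2_norm_eq_inner
    by (simp add: inner_diff inner_commute algebra_simps power2_eq_square)
  finally have "l * (2 * a) \<le> l * (l * q)" by (simp add: power2_eq_square algebra_simps)
  then have "2 * a \<le> l * q" using l(1) by simp
  then show False using l(3) a0 by simp
qed

lemma pythagoras_obtuse:
  fixes y p z :: "'a::real_inner"
  assumes "(y - p) \<bullet> (z - p) \<le> 0"
  shows "(norm (y - p))\<^sup>2 + (norm (p - z))\<^sup>2 \<le> (norm (y - z))\<^sup>2"
proof -
  have "(norm (y - z))\<^sup>2 = (norm ((y - p) + (p - z)))\<^sup>2" by simp
  also have "\<dots> = (norm (y - p))\<^sup>2 + (norm (p - z))\<^sup>2 - 2 * ((y - p) \<bullet> (z - p))"
    by (simp add: power2_norm_eq_inner inner_add inner_diff inner_commute)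
  finally show ?thesis using assms by simp
qed

lemma nearest_point_unique:
  fixes S :: "'a::real_inner set"
  assumes "convex S" "p \<in> S" "q \<in> S"
    and "\<And>z. z \<in> S \<Longrightarrow> dist y p \<le> dist y z" "\<And>z. z \<in> S \<Longrightarrow> dist y q \<le> dist y z"
  shows "p = q"
proof -
  have "(norm (y - p))\<^sup>2 + (norm (p - q))\<^sup>2 \<le> (norm (y - q))\<^sup>2"
    using pythagoras_obtuse nearest_point_obtuse assms(1,2,3,4) by blast
  moreover have "norm (y - q) \<le> norm (y - p)" using assms(2,5) by (simp add: dist_norm)
  then have "(norm (y - q))\<^sup>2 \<le> (norm (y - p))\<^sup>2" by (simp add: power_mono)
  ultimately have "(norm (p - q))\<^sup>2 \<le> 0" by linarith
  then show ?thesis by simp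
qed

context
  fixes S :: "'a::{real_inner,complete_space} set"
  assumes S: "closed S" "convex S" "S \<noteq> {}"
begin

lemma metric_proj_nearest:
  shows metric_proj_in: "metric_proj S y \<in> S"
    and metric_proj_le_dist: "z \<in> S \<Longrightarrow> dist y (metric_proj S y) \<le> dist y z"
proof -
  obtain p where p: "p \<in> S" "\<And>z. z \<in> S \<Longrightarrow> dist y p \<le> dist y z"
    using closed_convex_nearest_point_exists[OF S] by blast
  have "metric_proj S y = p" unfolding metric_proj_def
    by (rule the_equality) (use p nearest_point_unique[OF S(2)] in blast)+
  then show "metric_proj S y \<in> S" "z \<in> S \<Longrightarrow> dist y (metric_proj S y) \<le> dist y z"
    using p by auto
qed

lemma metric_proj_obtuse: "z \<in> S \<Longrightarrow> (y - metric_proj S y) \<bullet> (z - metric_proj S y) \<le> 0"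
  using nearest_point_obtuse[OF S(2) metric_proj_in metric_proj_le_dist] .

lemma metric_proj_eqI:
  assumes "p \<in> S" "\<And>z. z \<in> S \<Longrightarrow> (y - p) \<bullet> (z - p) \<le> 0"
  shows "metric_proj S y = p"
proof (rule nearest_point_unique[OF S(2) metric_proj_in assms(1) metric_proj_le_dist])
  fix z assume "z \<in> S"
  have "(norm (y - p))\<^sup>2 \<le> (norm (y - z))\<^sup>2"
    using pythagoras_obtuse[OF assms(2)[OF \<open>z \<in> S\<close>]] zero_le_power2[of "norm (p - z)"] by linarith
  then show "dist y p \<le> dist y z" unfolding dist_norm by (rule power2_le_imp_le) simp
qed

lemma infdist_eq_dist_metric_proj: "infdist y S = dist y (metric_proj S y)"
proof (rule antisym)
  show "infdist y S \<le> dist y (metric_proj S y)" by (rule infdist_le[OF metric_proj_in])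
  show "dist y (metric_proj S y) \<le> infdist y S"
    unfolding infdist_notempty[OF S(3)] by (rule cINF_greatest[OF S(3) metric_proj_le_dist])
qed

lemma metric_proj_fejer:
  "z \<in> S \<Longrightarrow> (norm (y - metric_proj S y))\<^sup>2 + (norm (metric_proj S y - z))\<^sup>2 \<le> (norm (y - z))\<^sup>2"
  by (rule pythagoras_obtuse[OF metric_proj_obtuse])


end

lemma metric_proj_orthogonal_subspace:
  fixes S :: "'a::{real_inner,complete_space} set"
  assumes "closed S" "subspace S" "z \<in> S"
  shows "(y - metric_proj S y) \<bullet> z = 0"
proof -
  have S: "closed S" "convex S" "S \<noteq> {}"
    using assms subspace_imp_convex subspace_0 by auto
  let ?p = "metric_proj S y"
  have "?p + z \<in> S" "?p - z \<in> S"
    using metric_proj_in[OF S] assms(2,3) by (auto intro: subspace_add subspace_diff)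
  then have "(y - ?p) \<bullet> ((?p + z) - ?p) \<le> 0" "(y - ?p) \<bullet> ((?p - z) - ?p) \<le> 0"
    by (simp_all only: metric_proj_obtuse[OF S])
  then show ?thesis by simp
qed

lemma unit_hyperplane:
  fixes g :: "'a::{real_inner,complete_space}"
  assumes "norm g = 1"
  shows closed_convex_unit_hyperplane: "closed {z. g \<bullet> z = 0}" "convex {z. g \<bullet> z = 0}" "{z. g \<bullet> z = 0} \<noteq> {}"
    and metric_proj_unit_hyperplane: "metric_proj {z. g \<bullet> z = 0} y = y - (y \<bullet> g) *\<^sub>R g"
    and infdist_unit_hyperplane: "infdist y {z. g \<bullet> z = 0} = \<bar>y \<bullet> g\<bar>"
proof -
  show S: "closed {z. g \<bullet> z = 0}" "convex {z. g \<bullet> z = 0}" "{z. g \<bullet> z = 0} \<noteq> {}"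
    by (auto intro: closed_hyperplane convex_hyperplane exI[of _ 0])
  have "g \<bullet> g = 1" using assms by (simp add: dot_square_norm)
  then show proj: "metric_proj {z. g \<bullet> z = 0} y = y - (y \<bullet> g) *\<^sub>R g"
    by (intro metric_proj_eqI[OF S]) (auto simp: inner_diff_right inner_commute)
  show "infdist y {z. g \<bullet> z = 0} = \<bar>y \<bullet> g\<bar>"
    using assms by (simp add: infdist_eq_dist_metric_proj[OF S] proj dist_norm)
qed

lemma bounded_seq_inner_convergent_subseq:
  fixes a :: "nat \<Rightarrow> 'a::real_inner"
  assumes "\<And>n. norm (a n) \<le> B"
  obtains r where "strict_mono r" "\<And>m. convergent (\<lambda>k. a (r k) \<bullet> a m)"
proof -
  interpret diag: subseqs "\<lambda>m s. convergent (\<lambda>k. a (s k) \<bullet> a m)"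
  proof
    fix m and s :: "nat \<Rightarrow> nat"
    have "\<bar>a (s k) \<bullet> a m\<bar> \<le> B * norm (a m)" for k
      using Cauchy_Schwarz_ineq2[of "a (s k)" "a m"] assms[of "s k"]
      by (meson mult_right_mono norm_ge_zero order_trans)
    then have "bounded (range (\<lambda>k. a (s k) \<bullet> a m))" by (intro boundedI) auto
    then obtain l r where "strict_mono r" "((\<lambda>k. a (s k) \<bullet> a m) \<circ> r) \<longlonglongrightarrow> l"
      using bounded_imp_convergent_subsequence by blast
    then show "\<exists>r. strict_mono r \<and> convergent (\<lambda>k. a ((s \<circ> r) k) \<bullet> a m)"
      by (auto simp: convergent_def o_def)
  qed
  have "convergent (\<lambda>k. a (diag.diagseq k) \<bullet> a m)" for m
  proof -
    have "convergent (\<lambda>k. a ((diag.diagseq \<circ> (+) (Suc m)) k) \<bullet> a m)"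
    proof (rule diag.diagseq_holds)
      fix r s n assume "strict_mono (r :: nat \<Rightarrow> nat)" "convergent (\<lambda>k. a (s k) \<bullet> a n)"
      then show "convergent (\<lambda>k. a ((s \<circ> r) k) \<bullet> a n)"
        using convergent_subseq_convergent[of "\<lambda>k. a (s k) \<bullet> a n" r] by (simp add: o_def)
    qed
    then obtain l where "(\<lambda>k. a (diag.diagseq (k + Suc m)) \<bullet> a m) \<longlonglongrightarrow> l"
      by (auto simp: convergent_def o_def add.commute)
    then have "(\<lambda>k. a (diag.diagseq k) \<bullet> a m) \<longlonglongrightarrow> l" by (rule LIMSEQ_offset)
    then show ?thesis by (auto simp: convergent_def)
  qed
  then show ?thesis using that diag.subseq_diagseq by blast
qed

lemma closed_inner_convergent:
  fixes b :: "nat \<Rightarrow> 'a::real_inner"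
  assumes b: "\<And>k. norm (b k) \<le> B"
  shows "closed {z. convergent (\<lambda>k. b k \<bullet> z)}"
  unfolding closed_sequential_limits
proof (intro allI impI)
  fix zs z assume "(\<forall>n. zs n \<in> {z. convergent (\<lambda>k. b k \<bullet> z)}) \<and> zs \<longlonglongrightarrow> z"
  then have conv: "\<And>j. Cauchy (\<lambda>k. b k \<bullet> zs j)" and lim: "zs \<longlonglongrightarrow> z"
    by (auto simp: Cauchy_convergent_iff)
  have "Cauchy (\<lambda>k. b k \<bullet> z)"
  proof (rule metric_CauchyI)
    fix e :: real assume "0 < e"
    have B0: "0 \<le> B" using norm_ge_zero b[of 0] by (rule order_trans)
    \<comment> \<open>An \<open>e/3\<close> argument through a \<open>zs j\<close> close to \<open>z\<close>.\<close>
    have "\<forall>\<^sub>F j in sequentially. dist (zs j) z < e / (3 * (B + 1))"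
      using lim by (rule tendstoD) (use \<open>0 < e\<close> B0 in simp)
    then obtain j where j: "norm (zs j - z) < e / (3 * (B + 1))"
      using eventually_happens'[OF sequentially_bot] by (auto simp: dist_norm)
    have "e / 3 > 0" using \<open>0 < e\<close> by simp
    then obtain M where M: "\<And>m n. M \<le> m \<Longrightarrow> M \<le> n \<Longrightarrow> dist (b m \<bullet> zs j) (b n \<bullet> zs j) < e / 3"
      using metric_CauchyD[OF conv[of j]] by blast
    have close: "\<bar>b k \<bullet> z - b k \<bullet> zs j\<bar> \<le> e / 3" for k
    proof -
      have "\<bar>b k \<bullet> z - b k \<bullet> zs j\<bar> \<le> norm (b k) * norm (z - zs j)"
        unfolding inner_diff_right[symmetric] by (rule Cauchy_Schwarz_ineq2)
      also have "\<dots> \<le> (B + 1) * (e / (3 * (B + 1)))"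
        using b[of k] j B0 by (intro mult_mono) (auto simp: norm_minus_commute)
      also have "\<dots> = e / 3" using B0 by (simp add: field_simps)
      finally show ?thesis .
    qed
    have "dist (b m \<bullet> z) (b n \<bullet> z) < e" if "M \<le> m" "M \<le> n" for m n
      using M[OF that] close[of m] close[of n] unfolding dist_real_def by linarith
    then show "\<exists>M. \<forall>m\<ge>M. \<forall>n\<ge>M. dist (b m \<bullet> z) (b n \<bullet> z) < e" by blast
  qed
  then show "z \<in> {z. convergent (\<lambda>k. b k \<bullet> z)}" by (simp add: Cauchy_convergent_iff)
qed

lemma subspace_inner_convergent: "subspace {z. convergent (\<lambda>k. b k \<bullet> z)}"
  unfolding subspace_def
  by (auto simp: inner_add_right convergent_add convergent_const intro: convergent_mult[OF convergent_const])

lemma riesz_representation: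
  fixes f :: "'a::{real_inner,complete_space} \<Rightarrow> real"
  assumes f: "bounded_linear f"
  obtains y where "\<And>v. f v = y \<bullet> v"
proof (cases "\<forall>v. f v = 0")
  case True
  then show ?thesis using that[of 0] by simp
next
  case False
  then obtain u where "f u \<noteq> 0" by blast
  interpret f: bounded_linear f by (fact f)
  define K where "K = {v. f v = 0}"
  have "closed K" unfolding K_def
    by (intro closed_Collect_eq continuous_intros f.continuous_on)
  moreover have "subspace K" unfolding K_def using f.linear by (rule linear_subspace_kernel)
  ultimately have K: "closed K" "convex K" "K \<noteq> {}" "subspace K"
    using subspace_imp_convex subspace_0 by auto
  \<comment> \<open>The component of u orthogonal to the kernel represents f up to scaling.\<close>
  define w where "w = u - metric_proj K u"
  have w_orth: "w \<bullet> v = 0" if "v \<in> K" for v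
    unfolding w_def by (rule metric_proj_orthogonal_subspace[OF K(1,4) that])
  have "f w = f u" using metric_proj_in[OF K(1-3), of u] by (simp add: w_def K_def f.diff)
  then have fw: "f w \<noteq> 0" using \<open>f u \<noteq> 0\<close> by simp
  then have "w \<noteq> 0" by auto
  show ?thesis
  proof (rule that)
    fix v
    have "v - (f v / f w) *\<^sub>R w \<in> K" using fw by (simp add: K_def f.diff f.scaleR)
    then have "w \<bullet> (v - (f v / f w) *\<^sub>R w) = 0" by (rule w_orth)
    then have "w \<bullet> v = (f v / f w) * (w \<bullet> w)" by (simp add: inner_diff_right)
    then show "f v = ((f w / (w \<bullet> w)) *\<^sub>R w) \<bullet> v" using fw \<open>w \<noteq> 0\<close> by simp
  qed
qed

lemma inner_convergent_imp_weakly_convergent: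
  fixes b :: "nat \<Rightarrow> 'a::{real_inner,complete_space}"
  assumes b: "\<And>k. norm (b k) \<le> B" and conv: "\<And>z. convergent (\<lambda>k. b k \<bullet> z)"
  obtains y where "weakly_converges b y"
proof -
  have lim: "(\<lambda>k. b k \<bullet> z) \<longlonglongrightarrow> lim (\<lambda>k. b k \<bullet> z)" for z
    using conv by (simp add: convergent_LIMSEQ_iff)
  have "bounded_linear (\<lambda>z. lim (\<lambda>k. b k \<bullet> z))"
  proof (rule bounded_linear_intro)
    show "lim (\<lambda>k. b k \<bullet> (u + v)) = lim (\<lambda>k. b k \<bullet> u) + lim (\<lambda>k. b k \<bullet> v)" for u v
      using tendsto_add[OF lim[of u] lim[of v]] by (simp add: inner_add_right limI)
    show "lim (\<lambda>k. b k \<bullet> (c *\<^sub>R u)) = c *\<^sub>R lim (\<lambda>k. b k \<bullet> u)" for c u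
      using tendsto_mult_left[OF lim[of u], of c] by (simp add: limI)
    show "norm (lim (\<lambda>k. b k \<bullet> u)) \<le> norm u * B" for u
    proof (rule LIMSEQ_le_const2[OF tendsto_norm[OF lim[of u]]])
      have "norm (b k \<bullet> u) \<le> norm u * B" for k
        using Cauchy_Schwarz_ineq2[of "b k" u] mult_right_mono[OF b[of k], of "norm u"]
        by (simp add: mult.commute)
      then show "\<exists>N. \<forall>k\<ge>N. norm (b k \<bullet> u) \<le> norm u * B" by blast
    qed
  qed
  then obtain y where "\<And>z. lim (\<lambda>k. b k \<bullet> z) = y \<bullet> z"
    using riesz_representation by blast
  then have "weakly_converges b y" using lim by (simp add: weakly_converges_def)
  then show ?thesis by (rule that)
qed

lemma bounded_seq_weakly_convergent_subseq:
  fixes a :: "nat \<Rightarrow> 'a::{real_inner,complete_space}"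
  assumes a: "\<And>n. norm (a n) \<le> B"
  obtains r y where "strict_mono r" "weakly_converges (a \<circ> r) y"
proof -
  obtain r where r: "strict_mono r" and conv: "\<And>m. convergent (\<lambda>k. a (r k) \<bullet> a m)"
    using bounded_seq_inner_convergent_subseq[of a B] a by blast
  define b where "b = a \<circ> r"
  define Z where "Z = {z. convergent (\<lambda>k. b k \<bullet> z)}"
  have b: "norm (b k) \<le> B" for k unfolding b_def o_def by (rule a)
  have Z: "closed Z" "subspace Z"
    unfolding Z_def by (rule closed_inner_convergent[OF b], rule subspace_inner_convergent)
  \<comment> \<open>Every b k lies in Z, so b k is orthogonal to the component of z orthogonal to Z.\<close>
  have "z \<in> Z" for z
  proof -
    have Z': "closed Z" "convex Z" "Z \<noteq> {}" using Z subspace_imp_convex subspace_0 by auto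
    have "b k \<in> Z" for k using conv by (simp add: Z_def b_def)
    then have "(z - metric_proj Z z) \<bullet> b k = 0" for k
      by (rule metric_proj_orthogonal_subspace[OF Z])
    then have "b k \<bullet> (z - metric_proj Z z) = 0" for k by (metis inner_commute)
    then have "b k \<bullet> z = b k \<bullet> metric_proj Z z" for k by (simp add: inner_diff_right)
    moreover have "convergent (\<lambda>k. b k \<bullet> metric_proj Z z)"
      using metric_proj_in[OF Z', of z] by (simp add: Z_def)
    ultimately show ?thesis unfolding Z_def mem_Collect_eq by simp
  qed
  then have "convergent (\<lambda>k. b k \<bullet> z)" for z by (simp add: Z_def)
  then obtain y where "weakly_converges b y"
    by (rule inner_convergent_imp_weakly_convergent[of b B, OF b])
  then show ?thesis unfolding b_def by (rule that[OF r])
qed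

lemma weak_limit_in_closed_convex:
  fixes S :: "'a::{real_inner,complete_space} set"
  assumes S: "closed S" "convex S" "S \<noteq> {}"
    and "weakly_converges a w" and "(\<lambda>k. infdist (a k) S) \<longlonglongrightarrow> 0"
  shows "w \<in> S"
proof -
  define p where "p = metric_proj S w"
  \<comment> \<open>\<open>(w - p) \<bullet> (a k - p)\<close> tends to \<open>\<parallel>w - p\<parallel>\<^sup>2\<close>, but is at most \<open>\<parallel>w - p\<parallel> * infdist (a k) S\<close>.\<close>
  have le: "(w - p) \<bullet> (a k - p) \<le> norm (w - p) * infdist (a k) S" for k
  proof -
    define q where "q = metric_proj S (a k)"
    have "(w - p) \<bullet> (q - p) \<le> 0" unfolding p_def q_def by (rule metric_proj_obtuse[OF S metric_proj_in[OF S]])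
    moreover have "(w - p) \<bullet> (a k - q) \<le> norm (w - p) * norm (a k - q)"
      by (rule order_trans[OF abs_ge_self Cauchy_Schwarz_ineq2])
    moreover have "norm (a k - q) = infdist (a k) S"
      by (simp add: q_def infdist_eq_dist_metric_proj[OF S] dist_norm)
    ultimately show ?thesis by (simp add: inner_diff_right)
  qed
  have "(\<lambda>k. a k \<bullet> (w - p) - p \<bullet> (w - p)) \<longlonglongrightarrow> w \<bullet> (w - p) - p \<bullet> (w - p)"
    using assms(4) by (intro tendsto_diff tendsto_const) (simp add: weakly_converges_def)
  then have "(\<lambda>k. (w - p) \<bullet> (a k - p)) \<longlonglongrightarrow> (w - p) \<bullet> (w - p)"
    by (simp add: inner_diff inner_commute)
  moreover have "(\<lambda>k. norm (w - p) * infdist (a k) S) \<longlonglongrightarrow> norm (w - p) * 0"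
    by (intro tendsto_intros assms(5))
  ultimately have "(w - p) \<bullet> (w - p) \<le> 0" using le by (auto intro: LIMSEQ_le)
  then have "(w - p) \<bullet> (w - p) = 0" using inner_ge_zero[of "w - p"] by linarith
  then have "w = p" by simp
  then show ?thesis unfolding p_def by (rule ssubst) (rule metric_proj_in[OF S])
qed

lemma summable_telescoping_bound:
  fixes a b :: "nat \<Rightarrow> real"
  assumes "\<And>n. 0 \<le> a n" "\<And>n. 0 \<le> b n" "\<And>n. a n + b (Suc n) \<le> b n"
  shows "summable a"
proof (rule summableI_nonneg_bounded)
  have partial: "(\<Sum>i<n. a i) + b n \<le> b 0" for n
  proof (induction n)
    case (Suc n)
    then show ?case using assms(3)[of n] by simp
  qed simp
  show "(\<Sum>i<n. a i) \<le> b 0" for n using partial[of n] assms(2)[of n] by linarith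
qed (fact assms(1))

lemma not_summable_subseq_tendsto_zero:
  fixes t d :: "nat \<Rightarrow> real"
  assumes "\<not> summable (\<lambda>n. (t n)\<^sup>2)" "summable (\<lambda>n. (t n * d n)\<^sup>2)" "\<And>n. 0 \<le> d n"
  obtains r where "strict_mono r" "(d \<circ> r) \<longlonglongrightarrow> 0"
proof -
  have small: "\<exists>\<^sub>F n in sequentially. d n < e" if "e > 0" for e
  proof (rule ccontr)
    assume "\<not> (\<exists>\<^sub>F n in sequentially. d n < e)"
    then have "\<forall>\<^sub>F n in sequentially. norm ((t n)\<^sup>2) \<le> (t n * d n)\<^sup>2 / e\<^sup>2"
    proof (rule eventually_mono[OF iffD1[OF not_frequently]])
      fix n assume "\<not> d n < e"
      then have "e\<^sup>2 \<le> (d n)\<^sup>2" using \<open>e > 0\<close> by (simp add: power_mono)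
      then have "(t n)\<^sup>2 * e\<^sup>2 \<le> (t n)\<^sup>2 * (d n)\<^sup>2" by (simp add: mult_left_mono)
      then show "norm ((t n)\<^sup>2) \<le> (t n * d n)\<^sup>2 / e\<^sup>2"
        using \<open>e > 0\<close> by (simp add: field_simps power_mult_distrib)
    qed
    then have "summable (\<lambda>n. (t n)\<^sup>2)"
      by (rule summable_comparison_test_ev[OF _ summable_divide[OF assms(2)]])
    then show False using assms(1) by contradiction
  qed
  have "\<exists>r. \<forall>k. d (r k) < 1 / Suc k \<and> r k < r (Suc k)"
  proof (rule dependent_nat_choice)
    show "\<exists>n. d n < 1 / Suc 0" using frequently_ex[OF small] by simp
    fix n k
    have "0 < 1 / real (Suc (Suc k))" by simp
    from frequently_ex[OF frequently_eventually_conj[OF small[OF this] eventually_gt_at_top[of n]]]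
    show "\<exists>m. d m < 1 / Suc (Suc k) \<and> n < m" by blast
  qed
  then obtain r where r: "\<And>k. d (r k) < 1 / Suc k" "\<And>k. r k < r (Suc k)" by blast
  show ?thesis
  proof (rule that)
    show "strict_mono r" using r(2) by (rule strict_monoI_Suc)
    show "(d \<circ> r) \<longlonglongrightarrow> 0" using r(1) assms(3) by (intro LIMSEQ_norm_0) simp
  qed
qed

lemma infdist_le_SUP_infdist:
  assumes "\<alpha> \<in> \<Omega>" "c \<in> (\<Inter>\<alpha>\<in>\<Omega>. C \<alpha>)"
  shows "infdist y (C \<alpha>) \<le> (SUP \<beta>\<in>\<Omega>. infdist y (C \<beta>))"
proof (rule cSUP_upper[OF assms(1)])
  show "bdd_above ((\<lambda>\<beta>. infdist y (C \<beta>)) ` \<Omega>)"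
    using assms(2) by (intro bdd_aboveI2[of _ _ "dist y c"] infdist_le) auto
qed

lemma weak_limit_in_Inter_closed_convex:
  fixes C :: "'i \<Rightarrow> 'a::{real_inner,complete_space} set"
  assumes C: "\<And>\<alpha>. \<alpha> \<in> \<Omega> \<Longrightarrow> closed (C \<alpha>) \<and> convex (C \<alpha>)" and c: "c \<in> (\<Inter>\<alpha>\<in>\<Omega>. C \<alpha>)"
    and a: "weakly_converges a w" "(\<lambda>k. SUP \<alpha>\<in>\<Omega>. infdist (a k) (C \<alpha>)) \<longlonglongrightarrow> 0"
  shows "w \<in> (\<Inter>\<alpha>\<in>\<Omega>. C \<alpha>)"
proof
  fix \<alpha> assume "\<alpha> \<in> \<Omega>"
  show "w \<in> C \<alpha>"
  proof (rule weak_limit_in_closed_convex[OF _ _ _ a(1)])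
    show "closed (C \<alpha>)" "convex (C \<alpha>)" "C \<alpha> \<noteq> {}" using C \<open>\<alpha> \<in> \<Omega>\<close> c by auto
    show "(\<lambda>k. infdist (a k) (C \<alpha>)) \<longlonglongrightarrow> 0"
    proof (rule real_tendsto_sandwich[OF _ _ tendsto_const a(2)])
      show "\<forall>\<^sub>F k in sequentially. 0 \<le> infdist (a k) (C \<alpha>)" by (simp add: infdist_nonneg)
      show "\<forall>\<^sub>F k in sequentially. infdist (a k) (C \<alpha>) \<le> (SUP \<alpha>\<in>\<Omega>. infdist (a k) (C \<alpha>))"
        using infdist_le_SUP_infdist[OF \<open>\<alpha> \<in> \<Omega>\<close> c] by simp
    qed
  qed
qed

lemma remote_proj_seq_fejer:
  fixes C :: "'i \<Rightarrow> 'a::{real_inner,complete_space} set"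
  assumes C: "\<And>\<alpha>. \<alpha> \<in> \<Omega> \<Longrightarrow> closed (C \<alpha>) \<and> convex (C \<alpha>)"
    and c: "c \<in> (\<Inter>\<alpha>\<in>\<Omega>. C \<alpha>)" and t: "\<And>n. 0 \<le> t n" and x: "remote_proj_seq \<Omega> C t x"
  shows "summable (\<lambda>n. (t n * (SUP \<alpha>\<in>\<Omega>. infdist (x n) (C \<alpha>)))\<^sup>2)"
    and "norm (x n - c) \<le> norm (x 0 - c)"
proof -
  define D where "D n = (SUP \<alpha>\<in>\<Omega>. infdist (x n) (C \<alpha>))" for n
  obtain \<beta> where \<beta>: "\<And>n. \<beta> n \<in> \<Omega>" "\<And>n. t n * D n \<le> infdist (x n) (C (\<beta> n))"
    "\<And>n. x (Suc n) = metric_proj (C (\<beta> n)) (x n)"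
    using x unfolding remote_proj_seq_def D_def by metis
  have C\<beta>: "closed (C (\<beta> n))" "convex (C (\<beta> n))" "C (\<beta> n) \<noteq> {}" for n
    using C[OF \<beta>(1)] c \<beta>(1) by auto
  have step: "infdist (x n) (C (\<beta> n)) = norm (x n - x (Suc n))" for n
    by (simp add: infdist_eq_dist_metric_proj[OF C\<beta>] \<beta>(3) dist_norm)
  have fejer: "(norm (x n - x (Suc n)))\<^sup>2 + (norm (x (Suc n) - c))\<^sup>2 \<le> (norm (x n - c))\<^sup>2" for n
    using metric_proj_fejer[OF C\<beta>, of c n "x n"] c \<beta>(1) by (simp add: \<beta>(3))
  have steps: "summable (\<lambda>n. (norm (x n - x (Suc n)))\<^sup>2)"
    by (rule summable_telescoping_bound[of _ "\<lambda>n. (norm (x n - c))\<^sup>2", OF _ _ fejer]) simp_all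
  have le: "norm ((t n * D n)\<^sup>2) \<le> (norm (x n - x (Suc n)))\<^sup>2" for n
  proof -
    have "0 \<le> D n" using infdist_le_SUP_infdist[OF \<beta>(1) c] infdist_nonneg order_trans
      unfolding D_def by blast
    then show ?thesis using t[of n] \<beta>(2)[of n] step[of n] by (simp add: power_mono)
  qed
  show "summable (\<lambda>n. (t n * D n)\<^sup>2)"
    using le by (intro summable_comparison_test[OF _ steps]) blast
  have "decseq (\<lambda>n. (norm (x n - c))\<^sup>2)"
    using fejer by (intro decseq_SucI) (smt (verit) zero_le_power2)
  then have "(norm (x n - c))\<^sup>2 \<le> (norm (x 0 - c))\<^sup>2" by (simp add: decseq_def)
  then show "norm (x n - c) \<le> norm (x 0 - c)" by (rule power2_le_imp_le) simp
qed

theorem remote_proj_seq_partial_weak_limit: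
  fixes C :: "'i \<Rightarrow> 'a::{real_inner,complete_space} set"
  assumes t: "\<And>n. 0 \<le> t n" "\<not> summable (\<lambda>n. (t n)\<^sup>2)"
    and C: "\<And>\<alpha>. \<alpha> \<in> \<Omega> \<Longrightarrow> closed (C \<alpha>) \<and> convex (C \<alpha>)"
    and "(\<Inter>\<alpha>\<in>\<Omega>. C \<alpha>) \<noteq> {}" and x: "remote_proj_seq \<Omega> C t x"
  shows "\<exists>y\<in>(\<Inter>\<alpha>\<in>\<Omega>. C \<alpha>). partial_weak_limit x y"
proof -
  obtain c where c: "c \<in> (\<Inter>\<alpha>\<in>\<Omega>. C \<alpha>)" using assms(4) by blast
  define D where "D n = (SUP \<alpha>\<in>\<Omega>. infdist (x n) (C \<alpha>))" for n
  have D_nonneg: "0 \<le> D n" for n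
  proof -
    obtain \<alpha> where "\<alpha> \<in> \<Omega>" using x unfolding remote_proj_seq_def by blast
    then show ?thesis using infdist_le_SUP_infdist[OF _ c] infdist_nonneg order_trans
      unfolding D_def by blast
  qed
  have "summable (\<lambda>n. (t n * D n)\<^sup>2)"
    unfolding D_def by (rule remote_proj_seq_fejer(1)[of \<Omega> C, OF C c t(1) x])
  then obtain r where r: "strict_mono r" "(D \<circ> r) \<longlonglongrightarrow> 0"
    by (rule not_summable_subseq_tendsto_zero[OF t(2) _ D_nonneg])
  have "norm ((x \<circ> r) n) \<le> norm c + norm (x 0 - c)" for n
    using norm_triangle_sub[of "x (r n)" c] remote_proj_seq_fejer(2)[of \<Omega> C, OF C c t(1) x, of "r n"]
    by simp
  then obtain s y where s: "strict_mono s" and y: "weakly_converges (x \<circ> r \<circ> s) y"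
    by (rule bounded_seq_weakly_convergent_subseq)
  have "(\<lambda>k. D ((r \<circ> s) k)) \<longlonglongrightarrow> 0" using LIMSEQ_subseq_LIMSEQ[OF r(2) s] by (simp add: o_def)
  moreover have "weakly_converges (\<lambda>k. x ((r \<circ> s) k)) y" using y by (simp add: o_def)
  ultimately have "y \<in> (\<Inter>\<alpha>\<in>\<Omega>. C \<alpha>)"
    unfolding D_def by (intro weak_limit_in_Inter_closed_convex[OF C c])
  moreover have "partial_weak_limit x y"
    unfolding partial_weak_limit_def using r(1) s y strict_mono_o by (metis comp_assoc)
  ultimately show ?thesis by blast
qed

lemma wga_seq_remote_proj_seq:
  fixes D :: "'a::{real_inner,complete_space} set"
  assumes D: "\<And>g. g \<in> D \<Longrightarrow> norm g = 1" and x: "wga_seq D t x"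
  shows "remote_proj_seq ((\<lambda>g. {z. g \<bullet> z = 0}) ` D) id t x"
proof -
  have SUP_eq: "(SUP H\<in>(\<lambda>g. {z. g \<bullet> z = 0}) ` D. infdist y (id H)) = (SUP g\<in>D. \<bar>y \<bullet> g\<bar>)" for y
  proof -
    have "(SUP H\<in>(\<lambda>g. {z. g \<bullet> z = 0}) ` D. infdist y (id H)) = (SUP g\<in>D. infdist y {z. g \<bullet> z = 0})"
      by (simp add: image_image)
    also have "\<dots> = (SUP g\<in>D. \<bar>y \<bullet> g\<bar>)" using infdist_unit_hyperplane[OF D] by (intro SUP_cong) auto
    finally show ?thesis .
  qed
  show ?thesis unfolding remote_proj_seq_def
  proof (intro conjI impI allI)
    fix y assume "\<exists>n. t n = 1"
    then obtain g where "g \<in> D" "\<bar>y \<bullet> g\<bar> = (SUP g\<in>D. \<bar>y \<bullet> g\<bar>)"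
      using x unfolding wga_seq_def by blast
    then show "\<exists>H\<in>(\<lambda>g. {z. g \<bullet> z = 0}) ` D.
        infdist y (id H) = (SUP H\<in>(\<lambda>g. {z. g \<bullet> z = 0}) ` D. infdist y (id H))"
      using infdist_unit_hyperplane[OF D] SUP_eq by auto
  next
    fix n
    obtain g where "g \<in> D" "t n * (SUP g\<in>D. \<bar>x n \<bullet> g\<bar>) \<le> \<bar>x n \<bullet> g\<bar>"
      "x (Suc n) = x n - (x n \<bullet> g) *\<^sub>R g"
      using x unfolding wga_seq_def by blast
    then show "\<exists>H\<in>(\<lambda>g. {z. g \<bullet> z = 0}) ` D.
        t n * (SUP H\<in>(\<lambda>g. {z. g \<bullet> z = 0}) ` D. infdist (x n) (id H)) \<le> infdist (x n) (id H)
        \<and> x (Suc n) = metric_proj (id H) (x n)"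
      using infdist_unit_hyperplane[OF D] metric_proj_unit_hyperplane[OF D] SUP_eq by auto
  qed
qed

lemma dictionary_orthogonal_eq_zero:
  assumes "dictionary D" "\<And>g. g \<in> D \<Longrightarrow> g \<bullet> y = 0"
  shows "y = 0"
proof -
  have "D \<subseteq> {z. y \<bullet> z = 0}" using assms(2) by (auto simp: inner_commute)
  moreover have "subspace {z. y \<bullet> z = 0}" by (simp add: subspace_def inner_add_right)
  ultimately have "closure (span D) \<subseteq> {z. y \<bullet> z = 0}"
    by (intro closure_minimal span_minimal closed_hyperplane)
  then have "y \<bullet> y = 0" using assms(1) unfolding dictionary_def by blast
  then show "y = 0" by simp
qed

theorem wga_seq_partial_weak_limit_zero:
  fixes D :: "'a::{real_inner,complete_space} set"
  assumes "\<And>n. 0 \<le> t n" "\<not> summable (\<lambda>n. (t n)\<^sup>2)" "dictionary D" "wga_seq D t x"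
  shows "partial_weak_limit x 0"
proof -
  have D: "\<And>g. g \<in> D \<Longrightarrow> norm g = 1" using assms(3) by (simp add: dictionary_def)
  let ?\<Omega> = "(\<lambda>g. {z. g \<bullet> z = 0}) ` D"
  have "closed (id H) \<and> convex (id H)" if "H \<in> ?\<Omega>" for H
    using that closed_convex_unit_hyperplane(1,2)[OF D] by auto
  moreover have "0 \<in> (\<Inter>H\<in>?\<Omega>. id H)" by simp
  then have "(\<Inter>H\<in>?\<Omega>. id H) \<noteq> {}" by blast
  ultimately obtain y where y: "y \<in> (\<Inter>H\<in>?\<Omega>. id H)" "partial_weak_limit x y"
    using remote_proj_seq_partial_weak_limit[OF assms(1,2) _ _ wga_seq_remote_proj_seq[OF D assms(4)]]
    by blast
  have "y = 0" using y(1) by (intro dictionary_orthogonal_eq_zero[OF assms(3)]) auto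
  then show ?thesis using y(2) by simp
qed

lemma finite_unit_orthogonal_exists:
  fixes L :: "'a::real_inner set"
  assumes "finite L" "span L \<noteq> UNIV"
  obtains w where "norm w = 1" "\<And>u. u \<in> L \<Longrightarrow> u \<bullet> w = 0"
proof -
  obtain B where B: "finite B" "span B = span L" "pairwise orthogonal B"
    using basis_orthogonal[OF assms(1)] by blast
  obtain v where v: "v \<notin> span L" using assms(2) by blast
  define w where "w = v - (\<Sum>b\<in>B. (b \<bullet> v / (b \<bullet> b)) *\<^sub>R b)"
  have "orthogonal b w" if "b \<in> B" for b
  proof -
    have "b \<bullet> (\<Sum>c\<in>B. (c \<bullet> v / (c \<bullet> c)) *\<^sub>R c) = (\<Sum>c\<in>B. if c = b then b \<bullet> v else 0)"
      unfolding inner_sum_right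
    proof (rule sum.cong[OF refl])
      fix c assume "c \<in> B"
      then show "b \<bullet> ((c \<bullet> v / (c \<bullet> c)) *\<^sub>R c) = (if c = b then b \<bullet> v else 0)"
        using B(3) that by (cases "c = b") (auto simp: pairwise_def orthogonal_def inner_commute)
    qed
    then show ?thesis using B(1) that by (simp add: orthogonal_def w_def inner_diff_right)
  qed
  then have orth: "orthogonal u w" if "u \<in> L" for u
    using orthogonal_to_span[of u B w] B(2) that span_base orthogonal_commute by metis
  have "(\<Sum>b\<in>B. (b \<bullet> v / (b \<bullet> b)) *\<^sub>R b) \<in> span L"
    unfolding B(2)[symmetric] by (intro span_sum span_scale span_base)
  then have "w \<noteq> 0" using v by (auto simp: w_def)
  show ?thesis
    by (rule that[of "w /\<^sub>R norm w"]) (use \<open>w \<noteq> 0\<close> orth in \<open>auto simp: orthogonal_def\<close>)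
qed

lemma infinite_dimensional_orthonormal_seq:
  assumes "\<forall>B :: 'a::real_inner set. finite B \<longrightarrow> span B \<noteq> UNIV"
  obtains e :: "nat \<Rightarrow> 'a::real_inner" where "\<And>i j. e i \<bullet> e j = (if i = j then 1 else 0)"
proof -
  have "\<exists>e :: nat \<Rightarrow> 'a. \<forall>n. norm (e n) = 1 \<and> (\<forall>m<n. e m \<bullet> e n = 0)"
  proof (rule dependent_wellorder_choice)
    fix n and e :: "nat \<Rightarrow> 'a"
    have "finite (e ` {..<n})" by simp
    then obtain w where "norm w = 1" "\<And>u. u \<in> e ` {..<n} \<Longrightarrow> u \<bullet> w = 0"
      using finite_unit_orthogonal_exists assms by metis
    then show "\<exists>w. norm w = 1 \<and> (\<forall>m<n. e m \<bullet> w = 0)" by auto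
  qed simp
  then obtain e :: "nat \<Rightarrow> 'a" where e: "\<And>n. norm (e n) = 1" "\<And>m n. m < n \<Longrightarrow> e m \<bullet> e n = 0"
    by blast
  have "e i \<bullet> e j = (if i = j then 1 else 0)" for i j
  proof (cases i j rule: linorder_cases)
    case less
    then show ?thesis using e(2)[of i j] by simp
  next
    case equal
    then show ?thesis using e(1)[of i] by (simp add: dot_square_norm)
  next
    case greater
    then show ?thesis using e(2)[of j i] by (simp add: inner_commute)
  qed
  then show ?thesis by (rule that)
qed

lemma SUP_inner_le_norm:
  assumes "D \<noteq> {}" "\<And>g. g \<in> D \<Longrightarrow> norm g = 1"
  shows "(SUP g\<in>D. \<bar>y \<bullet> g\<bar>) \<le> norm y"
proof (rule cSUP_least[OF assms(1)])
  fix g assume "g \<in> D"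
  then show "\<bar>y \<bullet> g\<bar> \<le> norm y" using Cauchy_Schwarz_ineq2[of y g] assms(2) by simp
qed

lemma SUP_attained_finite_dominating:
  fixes f :: "'a \<Rightarrow> real"
  assumes "finite F" "F \<noteq> {}" "F \<subseteq> D" "\<And>h. h \<in> D \<Longrightarrow> \<exists>g\<in>F. f h \<le> f g"
  shows "\<exists>h\<in>D. f h = (SUP g\<in>D. f g)"
proof -
  have "Max (f ` F) \<in> f ` F" using assms(1,2) by (intro Max_in) auto
  then obtain h where h: "h \<in> F" "Max (f ` F) = f h" by blast
  have "f g \<le> f h" if "g \<in> D" for g
    using assms(4)[OF that] assms(1) h(2)[symmetric] by (auto intro: order_trans Max_ge)
  then have "(SUP g\<in>D. f g) = f h" using h(1) assms(3) by (intro cSup_eq_maximum) auto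
  then show ?thesis using h(1) assms(3) by auto
qed

text \<open>A realization of the weak greedy algorithm whose residuals stay away from 0 weakly when
  \<open>\<Sum>k\<ge>N. (t k)\<^sup>2 \<le> 1/2\<close>. The first N steps remove \<open>e 1, \<dots>, e N\<close> exactly. Afterwards
  the atom \<open>g = (t n / \<parallel>x\<parallel>) x - sqrt (1 - (t n)\<^sup>2) e (n + 1)\<close> is a unit vector with
  \<open>\<langle>x, g\<rangle> = t n \<parallel>x\<parallel>\<close>, which meets the weakness condition, and the step only multiplies
  the \<open>e 0\<close>-coordinate of the residual by \<open>1 - (t n)\<^sup>2\<close>.\<close>
locale wga_counterexample =
  fixes e :: "nat \<Rightarrow> 'a::real_inner" and t :: "nat \<Rightarrow> real" and N :: nat
  assumes orthonormal: "\<And>i j. e i \<bullet> e j = (if i = j then 1 else 0)"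
    and t_nonneg: "\<And>n. 0 \<le> t n" and t_le_one: "\<And>n. t n \<le> 1"
    and tail_small: "\<And>n. (\<Sum>k\<in>{N..<n}. (t k)\<^sup>2) \<le> 1 / 2"
begin

definition tail_space :: "'a set" where
  "tail_space = {v. \<forall>i\<in>{1..N}. e i \<bullet> v = 0}"

definition dict :: "'a set" where
  "dict = e ` {1..N} \<union> {v \<in> tail_space. norm v = 1}"

definition atom :: "nat \<Rightarrow> 'a \<Rightarrow> 'a" where
  "atom n y = (if n < N then e (Suc n) else (t n / norm y) *\<^sub>R y - sqrt (1 - (t n)\<^sup>2) *\<^sub>R e (Suc n))"

primrec residual :: "nat \<Rightarrow> 'a" where
  "residual 0 = e 0 + (\<Sum>i\<in>{1..N}. e i)"
| "residual (Suc n) = residual n - (residual n \<bullet> atom n (residual n)) *\<^sub>R atom n (residual n)"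

lemma norm_e: "norm (e i) = 1"
  using orthonormal[of i i] by (simp add: norm_eq_sqrt_inner)

lemma sum_e_inner: "finite I \<Longrightarrow> (\<Sum>i\<in>I. e i) \<bullet> e j = (if j \<in> I then 1 else 0)"
  by (simp add: inner_sum_left orthonormal)

lemma subspace_tail_space: "subspace tail_space"
  by (auto simp: subspace_def tail_space_def inner_add_right)

lemma e_in_tail_space: "i = 0 \<or> N < i \<Longrightarrow> e i \<in> tail_space"
  by (auto simp: tail_space_def orthonormal)

lemma norm_dict: "h \<in> dict \<Longrightarrow> norm h = 1"
  by (auto simp: dict_def norm_e)

definition tail_proj :: "'a \<Rightarrow> 'a" where
  "tail_proj y = y - (\<Sum>i\<in>{1..N}. (y \<bullet> e i) *\<^sub>R e i)"

lemma tail_proj_in_tail_space: "tail_proj y \<in> tail_space"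
proof -
  have "e j \<bullet> (\<Sum>i\<in>{1..N}. (y \<bullet> e i) *\<^sub>R e i) = y \<bullet> e j" if "j \<in> {1..N}" for j
    using that by (simp add: inner_sum_right orthonormal if_distrib cong: if_cong)
  then show ?thesis by (simp add: tail_proj_def tail_space_def inner_diff_right inner_commute)
qed

lemma inner_tail_proj: "v \<in> tail_space \<Longrightarrow> y \<bullet> v = tail_proj y \<bullet> v"
  by (simp add: tail_proj_def tail_space_def inner_diff_left inner_sum_left)

lemma dictionary_dict: "dictionary dict"
proof -
  have "y \<in> span dict" for y
  proof -
    let ?p = "tail_proj y"
    have "?p \<in> span dict"
    proof (cases "?p = 0")
      case False
      have "?p /\<^sub>R norm ?p \<in> dict"
        using False tail_proj_in_tail_space subspace_scale[OF subspace_tail_space]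
        by (simp add: dict_def)
      then have "norm ?p *\<^sub>R (?p /\<^sub>R norm ?p) \<in> span dict" by (intro span_scale span_base)
      then show ?thesis using False by simp
    qed (simp add: span_zero)
    moreover have "(\<Sum>i\<in>{1..N}. (y \<bullet> e i) *\<^sub>R e i) \<in> span dict"
      by (intro span_sum span_scale span_base) (auto simp: dict_def)
    ultimately show ?thesis using span_add unfolding tail_proj_def by fastforce
  qed
  then have "span dict = UNIV" by auto
  then show ?thesis using norm_dict by (simp add: dictionary_def)
qed

lemma e_in_dict: "i = 0 \<or> N < i \<Longrightarrow> e i \<in> dict"
  using e_in_tail_space norm_e by (simp add: dict_def)

lemma dict_SUP_attained: "\<exists>h\<in>dict. \<bar>y \<bullet> h\<bar> = (SUP g\<in>dict. \<bar>y \<bullet> g\<bar>)"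
proof -
  let ?p = "tail_proj y"
  define u where "u = (if ?p = 0 then e 0 else ?p /\<^sub>R norm ?p)"
  have u: "u \<in> dict" "u \<in> tail_space"
    using e_in_dict[of 0] e_in_tail_space[of 0] tail_proj_in_tail_space[of y]
      subspace_scale[OF subspace_tail_space] by (auto simp: u_def dict_def)
  have "\<bar>y \<bullet> h\<bar> \<le> \<bar>y \<bullet> u\<bar>" if "h \<in> tail_space" "norm h = 1" for h
  proof -
    have "\<bar>y \<bullet> h\<bar> \<le> norm ?p"
      using inner_tail_proj[OF that(1)] Cauchy_Schwarz_ineq2[of ?p h] that(2) by simp
    also have "norm ?p = \<bar>y \<bullet> u\<bar>"
      using inner_tail_proj[OF u(2), of y] by (simp add: u_def dot_square_norm power2_eq_square)
    finally show ?thesis .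
  qed
  then show ?thesis
    using u(1) by (intro SUP_attained_finite_dominating[of "insert u (e ` {1..N})"]) (auto simp: dict_def)
qed

lemma residual_initial: "n \<le> N \<Longrightarrow> residual n = e 0 + (\<Sum>i\<in>{Suc n..N}. e i)"
proof (induction n)
  case (Suc n)
  then have "n < N" by simp
  have "residual n \<bullet> e (Suc n) = 1"
    using Suc \<open>n < N\<close> by (simp add: inner_add_left sum_e_inner orthonormal)
  then have "residual (Suc n) = e 0 + (\<Sum>i\<in>{Suc n..N}. e i) - e (Suc n)"
    using Suc \<open>n < N\<close> by (simp add: atom_def)
  also have "(\<Sum>i\<in>{Suc n..N}. e i) = e (Suc n) + (\<Sum>i\<in>{Suc (Suc n)..N}. e i)"
    using \<open>n < N\<close> by (simp add: sum.atLeast_Suc_atMost)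
  finally show ?case by simp
qed simp

lemma atom_tail:
  assumes "N \<le> n" "y \<in> tail_space" "y \<noteq> 0" "y \<bullet> e (Suc n) = 0"
  shows "atom n y \<in> dict" and "y \<bullet> atom n y = t n * norm y"
    and "y - (y \<bullet> atom n y) *\<^sub>R atom n y
           = (1 - (t n)\<^sup>2) *\<^sub>R y + (t n * norm y * sqrt (1 - (t n)\<^sup>2)) *\<^sub>R e (Suc n)"
proof -
  define c where "c = sqrt (1 - (t n)\<^sup>2)"
  have c: "c\<^sup>2 = 1 - (t n)\<^sup>2"
    using t_nonneg[of n] t_le_one[of n] by (simp add: c_def power_le_one)
  have atom: "atom n y = (t n / norm y) *\<^sub>R y - c *\<^sub>R e (Suc n)"
    using assms(1) by (simp add: atom_def c_def)
  have yy: "y \<bullet> y = (norm y)\<^sup>2" by (simp add: dot_square_norm)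
  show inner: "y \<bullet> atom n y = t n * norm y"
    using assms(3,4) by (simp add: atom inner_diff_right yy power2_eq_square)
  have "atom n y \<bullet> atom n y = (t n)\<^sup>2 + c\<^sup>2"
    using assms(3,4) by (simp add: atom inner_diff inner_commute yy orthonormal power2_eq_square)
  then have "norm (atom n y) = 1" using c by (simp add: norm_eq_sqrt_inner)
  moreover have "atom n y \<in> tail_space"
    using assms(1,2) e_in_tail_space[of "Suc n"] subspace_tail_space
    by (simp add: atom subspace_diff subspace_scale)
  ultimately show "atom n y \<in> dict" by (simp add: dict_def)
  show "y - (y \<bullet> atom n y) *\<^sub>R atom n y
      = (1 - (t n)\<^sup>2) *\<^sub>R y + (t n * norm y * c) *\<^sub>R e (Suc n)"
    using assms(3) unfolding inner by (simp add: atom algebra_simps power2_eq_square)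
qed

lemma residual_tail:
  assumes "N \<le> n"
  shows "residual n \<in> tail_space \<and> (\<forall>m>n. e m \<bullet> residual n = 0)
    \<and> 1 - (\<Sum>k\<in>{N..<n}. (t k)\<^sup>2) \<le> e 0 \<bullet> residual n"
  using assms
proof (induction n rule: nat_induct_at_least)
  case base
  have "residual N = e 0" using residual_initial[of N] by simp
  then show ?case using e_in_tail_space[of 0] by (simp add: orthonormal)
next
  case (Suc n)
  let ?y = "residual n" and ?S = "\<Sum>k\<in>{N..<n}. (t k)\<^sup>2"
  have y: "?y \<in> tail_space" "\<And>m. n < m \<Longrightarrow> e m \<bullet> ?y = 0" "1 - ?S \<le> e 0 \<bullet> ?y"
    using Suc.IH by auto
  have "0 < e 0 \<bullet> ?y" using y(3) tail_small[of n] by linarith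
  then have "?y \<noteq> 0" by auto
  moreover have "?y \<bullet> e (Suc n) = 0" using y(2)[of "Suc n"] by (simp add: inner_commute)
  ultimately have step: "residual (Suc n)
      = (1 - (t n)\<^sup>2) *\<^sub>R ?y + (t n * norm ?y * sqrt (1 - (t n)\<^sup>2)) *\<^sub>R e (Suc n)"
    using atom_tail(3)[OF Suc.hyps y(1)] by simp
  show ?case
  proof (intro conjI allI impI)
    show "residual (Suc n) \<in> tail_space"
      using y(1) e_in_tail_space[of "Suc n"] Suc.hyps subspace_tail_space
      unfolding step by (simp add: subspace_add subspace_scale)
    show "e m \<bullet> residual (Suc n) = 0" if "Suc n < m" for m
      using that y(2)[of m] unfolding step by (simp add: inner_add_right orthonormal)
    have t2: "0 \<le> 1 - (t n)\<^sup>2" using t_nonneg[of n] t_le_one[of n] by (simp add: power_le_one)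
    have "(1 - (t n)\<^sup>2) * (1 - ?S) \<le> (1 - (t n)\<^sup>2) * (e 0 \<bullet> ?y)"
      using y(3) t2 by (rule mult_left_mono)
    also have "\<dots> = e 0 \<bullet> residual (Suc n)" unfolding step by (simp add: inner_add_right orthonormal)
    moreover have "1 - (?S + (t n)\<^sup>2) \<le> (1 - (t n)\<^sup>2) * (1 - ?S)"
      using mult_nonneg_nonneg[of "(t n)\<^sup>2" ?S] sum_nonneg[of "{N..<n}" "\<lambda>k. (t k)\<^sup>2"]
      by (simp add: algebra_simps)
    ultimately have "1 - (?S + (t n)\<^sup>2) \<le> e 0 \<bullet> residual (Suc n)" by linarith
    then show "1 - (\<Sum>k\<in>{N..<Suc n}. (t k)\<^sup>2) \<le> e 0 \<bullet> residual (Suc n)"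
      using Suc.hyps by simp
  qed
qed

lemma residual_e0_lower_bound: "N \<le> n \<Longrightarrow> 1 / 2 \<le> e 0 \<bullet> residual n"
  using residual_tail[of n] tail_small[of n] by linarith

lemma residual_inner_dict_initial:
  assumes "n \<le> N" "h \<in> dict"
  shows "\<bar>residual n \<bullet> h\<bar> \<le> 1"
  using assms(2) unfolding dict_def
proof
  assume "h \<in> e ` {1..N}"
  then show ?thesis
    using assms(1) by (auto simp: residual_initial inner_add_left sum_e_inner orthonormal)
next
  assume h: "h \<in> {v \<in> tail_space. norm v = 1}"
  then have "(\<Sum>i\<in>{Suc n..N}. e i) \<bullet> h = 0" by (simp add: inner_sum_left tail_space_def)
  then have "residual n \<bullet> h = e 0 \<bullet> h" using assms(1) by (simp add: residual_initial inner_add_left)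
  then show ?thesis using Cauchy_Schwarz_ineq2[of "e 0" h] h norm_e by simp
qed

lemma wga_seq_residual: "wga_seq dict t residual"
  unfolding wga_seq_def
proof (intro conjI impI allI)
  show "\<exists>h\<in>dict. \<bar>y \<bullet> h\<bar> = (SUP g\<in>dict. \<bar>y \<bullet> g\<bar>)" for y by (rule dict_SUP_attained)
  have dict_ne: "dict \<noteq> {}" using e_in_dict[of 0] by auto
  fix n
  let ?y = "residual n"
  have "atom n ?y \<in> dict \<and> t n * (SUP g\<in>dict. \<bar>?y \<bullet> g\<bar>) \<le> \<bar>?y \<bullet> atom n ?y\<bar>"
  proof (cases "n < N")
    case True
    have "(SUP g\<in>dict. \<bar>?y \<bullet> g\<bar>) \<le> 1"
      using residual_inner_dict_initial True by (intro cSUP_least[OF dict_ne]) simp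
    then have "t n * (SUP g\<in>dict. \<bar>?y \<bullet> g\<bar>) \<le> t n"
      using mult_left_mono[OF _ t_nonneg[of n]] by fastforce
    moreover have "?y \<bullet> atom n ?y = 1"
      using True by (simp add: atom_def residual_initial inner_add_left sum_e_inner orthonormal)
    moreover have "atom n ?y \<in> dict" using True by (simp add: atom_def dict_def)
    ultimately show ?thesis using t_le_one[of n] by simp
  next
    case False
    then have y: "?y \<in> tail_space" "?y \<noteq> 0" "?y \<bullet> e (Suc n) = 0"
      using residual_tail[of n] residual_e0_lower_bound[of n] by (auto simp: inner_commute)
    have "t n * (SUP g\<in>dict. \<bar>?y \<bullet> g\<bar>) \<le> t n * norm ?y"
      using SUP_inner_le_norm[OF dict_ne norm_dict] t_nonneg[of n] by (rule mult_left_mono)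
    then show ?thesis using atom_tail(1,2)[OF _ y] False t_nonneg[of n] by simp
  qed
  then show "\<exists>g\<in>dict. t n * (SUP g\<in>dict. \<bar>?y \<bullet> g\<bar>) \<le> \<bar>?y \<bullet> g\<bar>
    \<and> residual (Suc n) = ?y - (?y \<bullet> g) *\<^sub>R g"
    by auto
qed

lemma not_partial_weak_limit_residual_zero: "\<not> partial_weak_limit residual 0"
proof
  assume "partial_weak_limit residual 0"
  then obtain r where r: "strict_mono r" "weakly_converges (residual \<circ> r) 0"
    unfolding partial_weak_limit_def by blast
  then have "(\<lambda>k. residual (r k) \<bullet> e 0) \<longlonglongrightarrow> 0" by (simp add: weakly_converges_def)
  moreover have "\<forall>\<^sub>F k in sequentially. 1 / 2 \<le> residual (r k) \<bullet> e 0"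
    using eventually_ge_at_top[of N]
  proof (rule eventually_mono)
    fix k assume "N \<le> k"
    then show "1 / 2 \<le> residual (r k) \<bullet> e 0"
      using residual_e0_lower_bound[of "r k"] seq_suble[OF r(1), of k] by (simp add: inner_commute)
  qed
  ultimately have "1 / 2 \<le> (0::real)" by (rule tendsto_lowerbound) simp
  then show False by simp
qed

end

lemma summable_imp_wga_counterexample:
  fixes t :: "nat \<Rightarrow> real"
  assumes t: "\<forall>n. 0 \<le> t n \<and> t n \<le> 1"
    and inf: "\<forall>B :: 'a::real_inner set. finite B \<longrightarrow> span B \<noteq> UNIV"
    and "summable (\<lambda>n. (t n)\<^sup>2)"
  obtains D :: "'a::real_inner set" and x g h
  where "dictionary D" "wga_seq D t x" "\<not> partial_weak_limit x 0"
    "g \<in> D" "h \<in> D" "g \<bullet> h = 0" "norm h = 1"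
proof -
  obtain e :: "nat \<Rightarrow> 'a" where e: "\<And>i j. e i \<bullet> e j = (if i = j then 1 else 0)"
    using infinite_dimensional_orthonormal_seq[OF inf] by blast
  obtain N where "\<forall>m\<ge>N. \<forall>n. norm (\<Sum>k\<in>{m..<n}. (t k)\<^sup>2) < 1 / 2"
    using assms(3) unfolding summable_Cauchy by (meson half_gt_zero zero_less_one)
  then have "norm (\<Sum>k\<in>{N..<n}. (t k)\<^sup>2) < 1 / 2" for n by blast
  then have "(\<Sum>k\<in>{N..<n}. (t k)\<^sup>2) \<le> 1 / 2" for n by (metis abs_less_iff less_imp_le real_norm_def)
  then interpret wga_counterexample e t N
    using e t by unfold_locales auto
  show thesis
    using that[OF dictionary_dict wga_seq_residual not_partial_weak_limit_residual_zero
        e_in_dict[of 0] e_in_dict[of "Suc N"]] orthonormal norm_e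
    by simp
qed

lemma summable_imp_remote_proj_counterexample:
  fixes t :: "nat \<Rightarrow> real"
  assumes t: "\<forall>n. 0 \<le> t n \<and> t n \<le> 1"
    and inf: "\<forall>B :: 'a::{real_inner,complete_space} set. finite B \<longrightarrow> span B \<noteq> UNIV"
    and "summable (\<lambda>n. (t n)\<^sup>2)"
  obtains \<Omega> :: "'a::{real_inner,complete_space} set set" and C :: "'a set \<Rightarrow> 'a set" and x
  where "\<exists>\<alpha>\<in>\<Omega>. \<exists>\<beta>\<in>\<Omega>. \<alpha> \<noteq> \<beta>"
    "\<forall>\<alpha>\<in>\<Omega>. closed (C \<alpha>) \<and> convex (C \<alpha>)" "(\<Inter>\<alpha>\<in>\<Omega>. C \<alpha>) \<noteq> {}"
    "remote_proj_seq \<Omega> C t x" "\<not> (\<exists>y\<in>(\<Inter>\<alpha>\<in>\<Omega>. C \<alpha>). partial_weak_limit x y)"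
proof -
  obtain D :: "'a set" and x g h where D: "dictionary D" "wga_seq D t x" "\<not> partial_weak_limit x 0"
    and gh: "g \<in> D" "h \<in> D" "g \<bullet> h = 0" "norm h = 1"
    using t inf assms(3) by (rule summable_imp_wga_counterexample)
  have unit: "\<And>g. g \<in> D \<Longrightarrow> norm g = 1" using D(1) by (simp add: dictionary_def)
  let ?\<Omega> = "(\<lambda>g. {z. g \<bullet> z = 0}) ` D"
  show thesis
  proof (rule that[of ?\<Omega> id x])
    have "h \<in> {z. g \<bullet> z = 0}" "h \<notin> {z. h \<bullet> z = 0}" using gh(3,4) by (simp_all add: dot_square_norm)
    then have "{z. g \<bullet> z = 0} \<noteq> {z. h \<bullet> z = 0}" by blast
    moreover have "{z. g \<bullet> z = 0} \<in> ?\<Omega>" "{z. h \<bullet> z = 0} \<in> ?\<Omega>" using gh(1,2) by simp_all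
    ultimately show "\<exists>\<alpha>\<in>?\<Omega>. \<exists>\<beta>\<in>?\<Omega>. \<alpha> \<noteq> \<beta>" by blast
    show "\<forall>\<alpha>\<in>?\<Omega>. closed (id \<alpha>) \<and> convex (id \<alpha>)"
      using closed_convex_unit_hyperplane(1,2)[OF unit] by simp
    have "0 \<in> (\<Inter>\<alpha>\<in>?\<Omega>. id \<alpha>)" by simp
    then show "(\<Inter>\<alpha>\<in>?\<Omega>. id \<alpha>) \<noteq> {}" by blast
    show "remote_proj_seq ?\<Omega> id t x" by (rule wga_seq_remote_proj_seq[OF unit D(2)])
    show "\<not> (\<exists>y\<in>(\<Inter>\<alpha>\<in>?\<Omega>. id \<alpha>). partial_weak_limit x y)"
    proof
      assume "\<exists>y\<in>(\<Inter>\<alpha>\<in>?\<Omega>. id \<alpha>). partial_weak_limit x y"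
      then obtain y where y: "y \<in> (\<Inter>\<alpha>\<in>?\<Omega>. id \<alpha>)" "partial_weak_limit x y" by blast
      have "y = 0" using y(1) by (intro dictionary_orthogonal_eq_zero[OF D(1)]) simp
      then show False using y(2) D(3) by simp
    qed
  qed
qed

theorem theorem3:
  fixes t :: "nat \<Rightarrow> real"
  assumes t_range: "\<forall>n. 0 \<le> t n \<and> t n \<le> 1"
  shows
    "(\<not> summable (\<lambda>n. (t n)\<^sup>2) \<longrightarrow>
        (\<forall>(\<Omega>::'i set) (C::'i \<Rightarrow> 'a::{real_inner,complete_space} set) x.
            (\<exists>\<alpha>\<in>\<Omega>. \<exists>\<beta>\<in>\<Omega>. \<alpha> \<noteq> \<beta>) \<and> (\<forall>\<alpha>\<in>\<Omega>. closed (C \<alpha>) \<and> convex (C \<alpha>))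
            \<and> (\<Inter>\<alpha>\<in>\<Omega>. C \<alpha>) \<noteq> {} \<and> remote_proj_seq \<Omega> C t x
            \<longrightarrow> (\<exists>y\<in>(\<Inter>\<alpha>\<in>\<Omega>. C \<alpha>). partial_weak_limit x y))
      \<and> (\<forall>(D::'a set) x. dictionary D \<and> wga_seq D t x \<longrightarrow> partial_weak_limit x 0))
     \<and>
     ((\<forall>B::'b::{real_inner,complete_space} set. finite B \<longrightarrow> span B \<noteq> UNIV) \<longrightarrow>
        ((\<forall>(\<Omega>::'b set set) (C::'b set \<Rightarrow> 'b set) x.
            (\<exists>\<alpha>\<in>\<Omega>. \<exists>\<beta>\<in>\<Omega>. \<alpha> \<noteq> \<beta>) \<and> (\<forall>\<alpha>\<in>\<Omega>. closed (C \<alpha>) \<and> convex (C \<alpha>))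
            \<and> (\<Inter>\<alpha>\<in>\<Omega>. C \<alpha>) \<noteq> {} \<and> remote_proj_seq \<Omega> C t x
            \<longrightarrow> (\<exists>y\<in>(\<Inter>\<alpha>\<in>\<Omega>. C \<alpha>). partial_weak_limit x y))
          \<longrightarrow> \<not> summable (\<lambda>n. (t n)\<^sup>2))
      \<and> ((\<forall>(D::'b set) x. dictionary D \<and> wga_seq D t x \<longrightarrow> partial_weak_limit x 0)
          \<longrightarrow> \<not> summable (\<lambda>n. (t n)\<^sup>2)))"
  using t_range
  apply (intro conjI impI allI notI)
  subgoal for \<Omega> C x
    by (rule remote_proj_seq_partial_weak_limit[of t]) auto
  subgoal for D x
    by (rule wga_seq_partial_weak_limit_zero[of t]) auto
  subgoal premises prems
  proof -
    obtain \<Omega> :: "'b set set" and C :: "'b set \<Rightarrow> 'b set" and x where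
      "\<exists>\<alpha>\<in>\<Omega>. \<exists>\<beta>\<in>\<Omega>. \<alpha> \<noteq> \<beta>" "\<forall>\<alpha>\<in>\<Omega>. closed (C \<alpha>) \<and> convex (C \<alpha>)"
      "(\<Inter>\<alpha>\<in>\<Omega>. C \<alpha>) \<noteq> {}" "remote_proj_seq \<Omega> C t x"
      "\<not> (\<exists>y\<in>(\<Inter>\<alpha>\<in>\<Omega>. C \<alpha>). partial_weak_limit x y)"
      using prems(1,2,4) by (rule summable_imp_remote_proj_counterexample)
    then show False using prems(3) by meson
  qed
  subgoal premises prems
  proof -
    obtain D :: "'b set" and x g h where "dictionary D" "wga_seq D t x" "\<not> partial_weak_limit x 0"
      "g \<in> D" "h \<in> D" "g \<bullet> h = 0" "norm h = 1"
      using prems(1,2,4) by (rule summable_imp_wga_counterexample)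
    then show False using prems(3) by blast
  qed
  done

end
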